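(* Let $E_0$ be a vertex of a weighted tree and let $\Delta$ be a chain of $(-2)$-vertices $F_1,\dots,F_n$ ($F_j$ adjacent to $F_{j+1}$) such that $E_0$ is adjacent to $F_k$ and to no other vertex of $\Delta$, where $k\ge1$ and $n\ge 2k-1$ (configuration $A_n^k$). Let $(m^{(1)},m^{(2)},\dots)$ be the multiplicity sequence of $\Delta$ at $E_0$. Then: (i) if $k=1$, the sequence is periodic: $(1^n,0,1^n,0,\dots)$; (ii) if $k\ge2$, write $n=lk+r+(k-1)$ with $l\ge1$, $0\le r\le k-1$. If $r<k-1$ the sequence begins $(k^l,r)$; if $r=k-1$ and $k\ge3$ it begins $(k^l,k-1,1)$; if $k=2$ and $r=1$ (so $n=2l+2$) it begins $(2^l,1,1,2^l,0)$. Here $a^l$ denotes $l$ consecutive entries equal to $a$.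
   Context: Let $E_0$ be a vertex and $\Delta$ a connected set of $(-2)$-vertices (each $F\in\Delta$ has $F\cdot F=-2$, adjacent vertices intersect with $1$, others with $0$), with $E_0$ adjacent to exactly one vertex $f\in\Delta$. The multiplicity sequence of $\Delta$ at $E_0$ is defined as follows. Let $\Gamma^{(1)}=\Delta$. Given a connected subset $\Gamma^{(s)}\subseteq\Delta$ containing $f$, let $Y^{(s)}$ be the smallest nonzero cycle supported on $\Gamma^{(s)}$ with $(E_0+Y^{(s)})\cdot F\le 0$ for all $F\in\Gamma^{(s)}$; if $\Gamma^{(s)}$ is empty put $Y^{(s)}=0$. Put $Z^{(1)}=E_0+Y^{(1)}$ and $Z^{(s+1)}=Z^{(s)}+E_0+Y^{(s+1)}$, where $\Gamma^{(s+1)}$ is the connected component containing $f$ of the set $\{F\in\Delta: Z^{(s)}\cdot F=0\}$ (empty if $f$ is not in this set). Then $m^{(s)}$ is the coefficient of $Y^{(s)}$ at $f$. *)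

theory Defs
  imports Main
begin

text \<open>The vertices of \<Delta> have type 'v; D is the (finite) vertex set of \<Delta>;
  ip F G is the intersection number F.G of two vertices of \<Delta>; e F is the intersection
  number E_0.F; f is the unique vertex of \<Delta> adjacent to E_0.
  A cycle supported on \<Delta> is a function 'v \<Rightarrow> int (coefficients); a cycle of the form
  c E_0 + Y is represented by the pair (c, Y).\<close>

definition cyc_dot :: "('v \<Rightarrow> 'v \<Rightarrow> int) \<Rightarrow> 'v set \<Rightarrow> ('v \<Rightarrow> int) \<Rightarrow> 'v \<Rightarrow> int" where
  "cyc_dot ip D Y F = (\<Sum>x\<in>D. Y x * ip x F)"

definition is_cand :: "('v \<Rightarrow> 'v \<Rightarrow> int) \<Rightarrow> ('v \<Rightarrow> int) \<Rightarrow> 'v set \<Rightarrow> 'v set \<Rightarrow> ('v \<Rightarrow> int) \<Rightarrow> bool" where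
  "is_cand ip e D \<Gamma> Y \<longleftrightarrow> (\<forall>x. x \<notin> \<Gamma> \<longrightarrow> Y x = 0) \<and> Y \<noteq> (\<lambda>_. 0) \<and>
     (\<forall>F\<in>\<Gamma>. e F + cyc_dot ip D Y F \<le> 0)"

definition minY :: "('v \<Rightarrow> 'v \<Rightarrow> int) \<Rightarrow> ('v \<Rightarrow> int) \<Rightarrow> 'v set \<Rightarrow> 'v set \<Rightarrow> ('v \<Rightarrow> int)" where
  "minY ip e D \<Gamma> = (if \<Gamma> = {} then (\<lambda>_. 0) else
     (THE Y. is_cand ip e D \<Gamma> Y \<and> (\<forall>Y'. is_cand ip e D \<Gamma> Y' \<longrightarrow> (\<forall>x. Y x \<le> Y' x))))"

definition comp_of :: "('v \<Rightarrow> 'v \<Rightarrow> int) \<Rightarrow> 'v set \<Rightarrow> 'v \<Rightarrow> 'v set" where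
  "comp_of ip S x = (if x \<in> S then
     {y. (x, y) \<in> {(a, b). a \<in> S \<and> b \<in> S \<and> a \<noteq> b \<and> ip a b \<noteq> 0}\<^sup>*} else {})"

text \<open>State at stage s+1: (\<Gamma>^(s+1), Y^(s+1), E_0-coefficient of Z^(s+1), \<Delta>-part of Z^(s+1)).\<close>
primrec ms_state :: "('v \<Rightarrow> 'v \<Rightarrow> int) \<Rightarrow> ('v \<Rightarrow> int) \<Rightarrow> 'v set \<Rightarrow> 'v \<Rightarrow> nat \<Rightarrow>
    'v set \<times> ('v \<Rightarrow> int) \<times> int \<times> ('v \<Rightarrow> int)" where
  "ms_state ip e D f 0 = (D, minY ip e D D, 1, minY ip e D D)"
| "ms_state ip e D f (Suc s) =
    (case ms_state ip e D f s of (\<Gamma>, Y, c, Z) \<Rightarrow>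
      (let \<Gamma>' = comp_of ip {F \<in> D. c * e F + cyc_dot ip D Z F = 0} f;
           Y' = minY ip e D \<Gamma>'
       in (\<Gamma>', Y', c + 1, \<lambda>x. Z x + Y' x)))"

text \<open>Multiplicity sequence, indexed from 1: mult_seq ... s = m^(s) for s \<ge> 1.\<close>
definition mult_seq :: "('v \<Rightarrow> 'v \<Rightarrow> int) \<Rightarrow> ('v \<Rightarrow> int) \<Rightarrow> 'v set \<Rightarrow> 'v \<Rightarrow> nat \<Rightarrow> int" where
  "mult_seq ip e D f s = fst (snd (ms_state ip e D f (s - 1))) f"

text \<open>Configuration A_n^k: chain F_1,...,F_n of (-2)-vertices (indexed by 1..n), E_0 meeting F_k only.\<close>
definition chain_ip :: "nat \<Rightarrow> nat \<Rightarrow> int" where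
  "chain_ip i j = (if i = j then -2 else if i = j + 1 \<or> j = i + 1 then 1 else 0)"

definition chain_e :: "nat \<Rightarrow> nat \<Rightarrow> int" where
  "chain_e k j = (if j = k then 1 else 0)"

definition chain_mult_seq :: "nat \<Rightarrow> nat \<Rightarrow> nat \<Rightarrow> int" where
  "chain_mult_seq n k = mult_seq chain_ip (chain_e k) {1..n} k"

end

theory Submission
  imports Defs
begin

(* Intersecting a cycle Y on the chain with F_j is the discrete Laplacian of its
   coefficients, so "(E_0 + Y).F <= 0 on an interval" says that Y is concave there with
   a slope drop at k. From this the smallest such cycle on an interval {a..b} containing k
   is the tent of slope 1 over {a-1..b+1}, flattened at height min (k-a+1) (b-k+1); the
   intersection numbers of E_0 + tent are +1 just outside the interval and -1 at the
   reflected point a+b-k.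

   Consequently, after every stage Z^(s).F = -1 at a single vertex (the defect) and 0
   elsewhere, the next Gamma is the interval around k cut off by the defect, and the whole
   construction collapses to an arithmetic recursion next_defect on the defect position
   (theorem chain_mult_seq_defect). *)

lemma chain_cyc_dot:
  assumes supp: "\<forall>x. x \<notin> {1..n} \<longrightarrow> Y x = 0" and F: "F \<in> {1..n}"
  shows "cyc_dot chain_ip {1..n} Y F = Y (F - 1) + Y (F + 1) - 2 * Y F"
proof -
  have term_eq: "Y x * chain_ip x F = (if x = F - 1 then Y x else 0) + (if x = F + 1 then Y x else 0)
      + (if x = F then -2 * Y x else 0)" if "x \<in> {1..n}" for x
    using F that by (auto simp: chain_ip_def)
  have "cyc_dot chain_ip {1..n} Y F = (\<Sum>x\<in>{1..n}. (if x = F - 1 then Y x else 0)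
      + (if x = F + 1 then Y x else 0) + (if x = F then -2 * Y x else 0))"
    unfolding cyc_dot_def by (rule sum.cong[OF refl term_eq])
  also have "\<dots> = Y (F - 1) + Y (F + 1) - 2 * Y F"
    using F supp by (simp add: sum.distrib)
  finally show ?thesis .
qed

lemma cyc_dot_add: "cyc_dot ip D (\<lambda>x. Z x + Y x) F = cyc_dot ip D Z F + cyc_dot ip D Y F"
  by (simp add: cyc_dot_def sum.distrib algebra_simps)

definition discr_concave :: "(nat \<Rightarrow> int) \<Rightarrow> nat \<Rightarrow> nat \<Rightarrow> bool" where
  "discr_concave Y p q \<longleftrightarrow> (\<forall>t. p < t \<and> t < q \<longrightarrow> Y (t - 1) + Y (t + 1) \<le> 2 * Y t)"

lemma telescope_lower:
  fixes Y :: "nat \<Rightarrow> int"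
  assumes "x0 \<le> x" and "\<And>t. x0 \<le> t \<Longrightarrow> t < x \<Longrightarrow> c \<le> Y (t + 1) - Y t"
  shows "Y x0 + int (x - x0) * c \<le> Y x"
  using assms
proof (induction x rule: dec_induct)
  case base then show ?case by simp
next
  case (step m)
  have "Y x0 + int (m - x0) * c \<le> Y m" and "c \<le> Y (m + 1) - Y m" using step by simp_all
  then show ?case using step(1) by (simp add: Suc_diff_le algebra_simps)
qed

lemma telescope_upper:
  fixes Y :: "nat \<Rightarrow> int"
  assumes "x0 \<le> x" and "\<And>t. x0 \<le> t \<Longrightarrow> t < x \<Longrightarrow> Y (t + 1) - Y t \<le> c"
  shows "Y x \<le> Y x0 + int (x - x0) * c"
  using telescope_lower[of x0 x "-c" "\<lambda>t. - Y t"] assms by force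

lemma concave_diff_antimono:
  assumes "discr_concave Y p q" and "p \<le> i" "i \<le> j" "j < q"
  shows "Y (j + 1) - Y j \<le> Y (i + 1) - Y i"
  using assms(3,4)
proof (induction j rule: dec_induct)
  case base then show ?case by simp
next
  case (step m)
  have "p < Suc m \<and> Suc m < q" using assms(2) step by simp
  then have "Y m + Y (m + 2) \<le> 2 * Y (m + 1)"
    using assms(1) unfolding discr_concave_def by (metis Suc_eq_plus1 add_Suc_right diff_Suc_1 one_add_one)
  then show ?case using step by simp
qed

lemma concave_lower_left:
  assumes conc: "discr_concave Y p q" and "p \<le> x" "x \<le> y" "y \<le> q"
  shows "min (Y p + int (x - p)) (Y y) \<le> Y x"
proof (cases "x = p")
  case True then show ?thesis by simp
next
  case x_gt: False
  show ?thesis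
  proof (cases "1 \<le> Y x - Y (x - 1)")
    case True
    have "Y p + int (x - p) * 1 \<le> Y x"
    proof (rule telescope_lower)
      fix t assume "p \<le> t" "t < x"
      then have "Y (x - 1 + 1) - Y (x - 1) \<le> Y (t + 1) - Y t"
        using concave_diff_antimono[OF conc, of t "x - 1"] assms by simp
      then show "1 \<le> Y (t + 1) - Y t" using True x_gt assms(2) by simp
    qed (use assms in simp)
    then show ?thesis by simp
  next
    case False
    have "Y y \<le> Y x + int (y - x) * 0"
    proof (rule telescope_upper)
      fix t assume "x \<le> t" "t < y"
      then have "Y (t + 1) - Y t \<le> Y (x - 1 + 1) - Y (x - 1)"
        using concave_diff_antimono[OF conc, of "x - 1" t] assms x_gt by simp
      then show "Y (t + 1) - Y t \<le> 0" using False x_gt assms(2) by simp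
    qed (use assms in simp)
    then show ?thesis by simp
  qed
qed

lemma concave_lower_right:
  assumes conc: "discr_concave Y p q" and "p \<le> y" "y \<le> x" "x \<le> q"
  shows "min (Y q + int (q - x)) (Y y) \<le> Y x"
proof (cases "x = q")
  case True then show ?thesis by simp
next
  case x_lt: False
  show ?thesis
  proof (cases "Y (x + 1) - Y x \<le> -1")
    case True
    have "Y q \<le> Y x + int (q - x) * (-1)"
    proof (rule telescope_upper)
      fix t assume "x \<le> t" "t < q"
      then show "Y (t + 1) - Y t \<le> -1"
        using concave_diff_antimono[OF conc, of x t] assms True by simp
    qed (use assms in simp)
    then show ?thesis by simp
  next
    case False
    have "Y y + int (x - y) * 0 \<le> Y x"
    proof (rule telescope_lower)
      fix t assume "y \<le> t" "t < x"
      then show "0 \<le> Y (t + 1) - Y t"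
        using concave_diff_antimono[OF conc, of t x] assms x_lt False by simp
    qed (use assms in simp)
    then show ?thesis by simp
  qed
qed

lemma concave_peak:
  assumes conc: "discr_concave Y p q" and "p < k" "k < q"
    and drop: "Y (k - 1) + Y (k + 1) + 1 \<le> 2 * Y k"
  shows "min (Y p + int (k - p)) (Y q + int (q - k)) \<le> Y k"
proof (cases "1 \<le> Y k - Y (k - 1)")
  case True
  have "Y p + int (k - p) * 1 \<le> Y k"
  proof (rule telescope_lower)
    fix t assume "p \<le> t" "t < k"
    then have "Y (k - 1 + 1) - Y (k - 1) \<le> Y (t + 1) - Y t"
      using concave_diff_antimono[OF conc, of t "k - 1"] assms by simp
    then show "1 \<le> Y (t + 1) - Y t" using True assms(2) by simp
  qed (use assms in simp)
  then show ?thesis by simp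
next
  case False
  have "Y q \<le> Y k + int (q - k) * (-1)"
  proof (rule telescope_upper)
    fix t assume "k \<le> t" "t < q"
    then show "Y (t + 1) - Y t \<le> -1"
      using concave_diff_antimono[OF conc, of k t] assms False by simp
  qed (use assms in simp)
  then show ?thesis by simp
qed

(* The candidate minimal cycle on an interval {a..b} containing k: a tent of slope 1
   rising from both ends, flattened at the height min (k-a+1) (b-k+1). *)
definition tent :: "nat \<Rightarrow> nat \<Rightarrow> nat \<Rightarrow> nat \<Rightarrow> int" where
  "tent k a b x = (if a \<le> x \<and> x \<le> b
     then min (int x - int a + 1) (min (min (int k - int a + 1) (int b - int k + 1)) (int b + 1 - int x))
     else 0)"

(* The Laplacian of the tent profile, computed on the integers: E_0 adds 1 at k and
   the only remaining defect is -1 at the reflection a+b-k of k. *)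
lemma min_tent_laplacian:
  fixes a b k x :: int
  assumes "a \<le> x" "x \<le> b" "a \<le> k" "k \<le> b"
  defines "m \<equiv> min (k - a + 1) (b - k + 1)"
  shows "(if x = k then 1 else 0) + min (x - 1 - a + 1) (min m (b + 1 - (x - 1)))
     + min (x + 1 - a + 1) (min m (b + 1 - (x + 1))) - 2 * min (x - a + 1) (min m (b + 1 - x))
     = (if x = a + b - k then -1 else 0)"
  using assms unfolding m_def min_def by (auto split: if_splits)

(* On {a-1..b+1} the tent is given by its min formula (it vanishes at a-1 and b+1). *)
lemma tent_eq_min:
  assumes "a \<le> k" "k \<le> b" "a \<le> x + 1" "x \<le> b + 1"
  shows "tent k a b x = min (int x - int a + 1) (min (min (int k - int a + 1) (int b - int k + 1)) (int b + 1 - int x))"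
  using assms unfolding tent_def min_def by auto

lemma tent_defect:
  assumes ab: "1 \<le> a" "a \<le> k" "k \<le> b" "b \<le> n" and F: "F \<in> {1..n}"
  shows "chain_e k F + cyc_dot chain_ip {1..n} (tent k a b) F =
     (if F + 1 = a \<or> F = b + 1 then 1 else if F = a + b - k then -1 else 0)"
proof -
  define m where "m = min (int k - int a + 1) (int b - int k + 1)"
  have dot: "cyc_dot chain_ip {1..n} (tent k a b) F = tent k a b (F - 1) + tent k a b (F + 1) - 2 * tent k a b F"
    by (rule chain_cyc_dot) (use ab F in \<open>auto simp: tent_def\<close>)
  consider "F + 1 < a" | "F + 1 = a" | "a \<le> F \<and> F \<le> b" | "b < F" by linarith
  then show ?thesis
  proof cases
    case 3
    have "a \<le> F - 1 + 1" "F - 1 \<le> b + 1" "int (F - 1) = int F - 1" using 3 ab by auto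
    then have left: "tent k a b (F - 1) = min (int F - 1 - int a + 1) (min m (int b + 1 - (int F - 1)))"
      using tent_eq_min[of a k b "F - 1"] ab unfolding m_def by simp
    have right: "tent k a b (F + 1) = min (int F + 1 - int a + 1) (min m (int b + 1 - (int F + 1)))"
      using tent_eq_min[of a k b "F + 1"] 3 ab unfolding m_def by simp
    have mid: "tent k a b F = min (int F - int a + 1) (min m (int b + 1 - int F))"
      using tent_eq_min[of a k b F] 3 ab unfolding m_def by simp
    have e: "chain_e k F = (if int F = int k then 1 else 0)"
      by (simp add: chain_e_def)
    have reflected: "(if int F = int a + int b - int k then -1 else 0) = (if F = a + b - k then -1 else (0::int))"
      using ab by auto
    have interior: "\<not> (F + 1 = a \<or> F = b + 1)" using 3 by auto
    have "(if int F = int k then 1 else 0) + min (int F - 1 - int a + 1) (min m (int b + 1 - (int F - 1)))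
        + min (int F + 1 - int a + 1) (min m (int b + 1 - (int F + 1)))
        - 2 * min (int F - int a + 1) (min m (int b + 1 - int F))
        = (if int F = int a + int b - int k then -1 else 0)"
      unfolding m_def by (rule min_tent_laplacian) (use 3 ab in auto)
    then show ?thesis
      unfolding dot left right mid e reflected using interior by (simp only: if_False add.assoc add_diff_eq)
  qed (use ab F dot in \<open>auto simp: tent_def chain_e_def\<close>)
qed

(* Minimality of the tent: every cycle on {a..b} satisfying (E_0 + Y).F <= 0 on the
   interval is concave with a slope drop at k, hence lies above the tent. *)
lemma tent_below_candidate:
  assumes ab: "1 \<le> a" "a \<le> k" "k \<le> b"
    and supp: "\<forall>x. x \<notin> {a..b} \<longrightarrow> Y x = 0"
    and cand: "\<forall>x\<in>{a..b}. Y (x - 1) + Y (x + 1) - 2 * Y x + (if x = k then 1 else 0) \<le> 0"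
  shows "tent k a b x \<le> Y x"
proof (cases "a \<le> x \<and> x \<le> b")
  case False
  then show ?thesis using supp by (auto simp: tent_def)
next
  case x_in: True
  define p q where "p = a - 1" and "q = b + 1"
  have pq: "p < t \<and> t < q \<longleftrightarrow> t \<in> {a..b}" for t
    using ab unfolding p_def q_def by auto
  have laplace: "Y (t - 1) + Y (t + 1) + (if t = k then 1 else 0) \<le> 2 * Y t" if "p < t" "t < q" for t
  proof -
    have "t \<in> {a..b}" using pq that by blast
    then show ?thesis using cand by fastforce
  qed
  have conc: "discr_concave Y p q"
    unfolding discr_concave_def using laplace by (smt (verit))
  have ends: "Y p = 0" "Y q = 0"
    using supp ab unfolding p_def q_def by auto
  have "min (int k - int a + 1) (int b - int k + 1) \<le> Y k"
  proof -
    have k_in: "p < k" "k < q" using ab unfolding p_def q_def by auto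
    have "Y (k - 1) + Y (k + 1) + 1 \<le> 2 * Y k" using laplace[OF k_in] by simp
    then show ?thesis
      using concave_peak[OF conc k_in] ab ends unfolding p_def q_def by (simp add: algebra_simps)
  qed
  moreover have pos: "p \<le> x" "x \<le> q" "p \<le> k" "k \<le> q"
    "int (x - p) = int x - int a + 1" "int (q - x) = int b + 1 - int x"
    using x_in ab unfolding p_def q_def by auto
  moreover have "min (int x - int a + 1) (Y k) \<le> Y x" if "x \<le> k"
    using concave_lower_left[OF conc, of x k] that ends pos by simp
  moreover have "min (int b + 1 - int x) (Y k) \<le> Y x" if "k \<le> x"
    using concave_lower_right[OF conc, of k x] that ends pos by simp
  ultimately show ?thesis
    using x_in unfolding tent_def min_def by (cases "x \<le> k") (simp_all split: if_split_asm)
qed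

lemma minY_eqI:
  assumes "\<Gamma> \<noteq> {}" and "is_cand ip e D \<Gamma> Y"
    and "\<And>Y'. is_cand ip e D \<Gamma> Y' \<Longrightarrow> \<forall>x. Y x \<le> Y' x"
  shows "minY ip e D \<Gamma> = Y"
proof -
  have "(THE Y. is_cand ip e D \<Gamma> Y \<and> (\<forall>Y'. is_cand ip e D \<Gamma> Y' \<longrightarrow> (\<forall>x. Y x \<le> Y' x))) = Y"
  proof (rule the_equality)
    fix Y0 assume "is_cand ip e D \<Gamma> Y0 \<and> (\<forall>Y'. is_cand ip e D \<Gamma> Y' \<longrightarrow> (\<forall>x. Y0 x \<le> Y' x))"
    then show "Y0 = Y" using assms(2,3) by (meson ext order_antisym)
  qed (use assms(2,3) in blast)
  then show ?thesis unfolding minY_def using assms(1) by simp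
qed

lemma minY_tent:
  assumes ab: "1 \<le> a" "a \<le> k" "k \<le> b" "b \<le> n"
  shows "minY chain_ip (chain_e k) {1..n} {a..b} = tent k a b"
proof (rule minY_eqI)
  show "{a..b} \<noteq> {}" using ab by simp
  show "is_cand chain_ip (chain_e k) {1..n} {a..b} (tent k a b)"
    unfolding is_cand_def
  proof (intro conjI ballI allI impI)
    fix x assume "x \<notin> {a..b}" then show "tent k a b x = 0" by (auto simp: tent_def)
  next
    have "tent k a b k \<noteq> 0" using ab by (auto simp: tent_def)
    then show "tent k a b \<noteq> (\<lambda>_. 0)" by metis
  next
    fix F assume "F \<in> {a..b}"
    then show "chain_e k F + cyc_dot chain_ip {1..n} (tent k a b) F \<le> 0"
      using tent_defect[OF ab, of F] ab by auto
  qed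
next
  fix Y assume Y: "is_cand chain_ip (chain_e k) {1..n} {a..b} Y"
  have supp: "\<forall>x. x \<notin> {a..b} \<longrightarrow> Y x = 0" using Y unfolding is_cand_def by blast
  have "\<forall>x\<in>{a..b}. Y (x - 1) + Y (x + 1) - 2 * Y x + (if x = k then 1 else 0) \<le> 0"
  proof
    fix x assume x: "x \<in> {a..b}"
    have "chain_e k x + cyc_dot chain_ip {1..n} Y x \<le> 0" using Y x unfolding is_cand_def by blast
    moreover have "cyc_dot chain_ip {1..n} Y x = Y (x - 1) + Y (x + 1) - 2 * Y x"
      by (rule chain_cyc_dot) (use supp x ab in auto)
    ultimately show "Y (x - 1) + Y (x + 1) - 2 * Y x + (if x = k then 1 else 0) \<le> 0"
      by (simp add: chain_e_def)
  qed
  then show "\<forall>x. tent k a b x \<le> Y x"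
    using tent_below_candidate[OF ab(1-3) supp] by blast
qed

lemma comp_of_chain_interval:
  assumes ab: "1 \<le> a" "a \<le> k" "k \<le> b" and S: "{a..b} \<subseteq> S" "a - 1 \<notin> S" "b + 1 \<notin> S"
  shows "comp_of chain_ip S k = {a..b}"
proof -
  define R where "R = {(x, y). x \<in> S \<and> y \<in> S \<and> x \<noteq> y \<and> chain_ip x y \<noteq> 0}"
  have R_iff: "(x, y) \<in> R \<longleftrightarrow> x \<in> S \<and> y \<in> S \<and> (y = x + 1 \<or> x = y + 1)" for x y
    unfolding R_def chain_ip_def by auto
  have comp: "comp_of chain_ip S k = {y. (k, y) \<in> R\<^sup>*}"
    unfolding comp_of_def R_def using ab S by auto
  have stays: "y \<in> {a..b}" if "(k, y) \<in> R\<^sup>*" for y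
    using that
  proof (induction rule: rtrancl_induct)
    case base then show ?case using ab by simp
  next
    case (step y z)
    then have "z \<in> S" "z = y + 1 \<or> y = z + 1" "a \<le> y" "y \<le> b" using R_iff by auto
    then show ?case using S ab by (cases "z = a - 1 \<or> z = b + 1") auto
  qed
  have walk: "(i, j) \<in> R\<^sup>* \<and> (j, i) \<in> R\<^sup>*" if "a \<le> i" "i \<le> j" "j \<le> b" for i j
    using that(2,3)
  proof (induction j rule: dec_induct)
    case base then show ?case by simp
  next
    case (step m)
    have "(m, Suc m) \<in> R" "(Suc m, m) \<in> R" using R_iff S that step by auto
    then show ?case using step
      by (meson converse_rtrancl_into_rtrancl rtrancl_into_rtrancl Suc_leD)
  qed
  have "(k, y) \<in> R\<^sup>*" if "y \<in> {a..b}" for y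
    using walk[of k y] walk[of y k] that ab by (cases "k \<le> y") auto
  then show ?thesis unfolding comp using stays by blast
qed

abbreviation chain_min_cycle :: "nat \<Rightarrow> nat \<Rightarrow> nat set \<Rightarrow> nat \<Rightarrow> int" where
  "chain_min_cycle n k \<Gamma> \<equiv> minY chain_ip (chain_e k) {1..n} \<Gamma>"

(* After each stage, Z^(s).F = -1 at exactly one vertex j of the chain and 0 elsewhere
   (j = 0 meaning that Z^(s).F = 0 everywhere). This is the position of the next defect. *)
definition next_defect :: "nat \<Rightarrow> nat \<Rightarrow> nat \<Rightarrow> nat" where
  "next_defect n k j = (if j = 0 then n + 1 - k else if j = k then 0
     else if k < j then j - k else j + n + 1 - k)"

definition defect_pos :: "nat \<Rightarrow> nat \<Rightarrow> nat \<Rightarrow> nat" where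
  "defect_pos n k t = (next_defect n k ^^ t) 0"

(* The set Gamma chosen next: the component of k in the chain with the defect removed. *)
definition active :: "nat \<Rightarrow> nat \<Rightarrow> nat \<Rightarrow> nat set" where
  "active n k j = (if j = 0 then {1..n} else if j = k then {}
     else if k < j then {1..j - 1} else {j + 1..n})"

(* The multiplicity m contributed by the next stage: the height of the tent at k. *)
definition defect_mult :: "nat \<Rightarrow> nat \<Rightarrow> nat \<Rightarrow> int" where
  "defect_mult n k j = (if j = 0 then min (int k) (int n + 1 - int k) else if j = k then 0
     else if k < j then min (int k) (int j - int k) else min (int k - int j) (int n + 1 - int k))"

lemma defect_pos_0 [simp]: "defect_pos n k 0 = 0"
  by (simp add: defect_pos_def)

lemma defect_pos_Suc: "defect_pos n k (Suc t) = next_defect n k (defect_pos n k t)"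
  by (simp add: defect_pos_def)

lemma defect_pos_le:
  assumes "1 \<le> k" shows "defect_pos n k t \<le> n"
  by (induction t) (use assms in \<open>auto simp: defect_pos_Suc next_defect_def\<close>)

lemma active_component:
  assumes k: "1 \<le> k" "k \<le> n" and j: "j \<le> n"
  shows "comp_of chain_ip {F \<in> {1..n}. F \<noteq> j} k = active n k j"
proof -
  consider "j = 0" | "j = k" | "k < j" | "0 < j" "j < k" by linarith
  then show ?thesis
  proof cases
    case 1
    have "comp_of chain_ip {F \<in> {1..n}. F \<noteq> j} k = {1..n}"
      by (rule comp_of_chain_interval) (use 1 k in auto)
    then show ?thesis using 1 by (simp add: active_def)
  next
    case 2
    then show ?thesis using k by (simp add: comp_of_def active_def)
  next
    case 3
    have "comp_of chain_ip {F \<in> {1..n}. F \<noteq> j} k = {1..j - 1}"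
      by (rule comp_of_chain_interval) (use 3 k j in auto)
    then show ?thesis using 3 by (simp add: active_def)
  next
    case 4
    have "comp_of chain_ip {F \<in> {1..n}. F \<noteq> j} k = {j + 1..n}"
      by (rule comp_of_chain_interval) (use 4 k j in auto)
    then show ?thesis using 4 by (simp add: active_def)
  qed
qed

lemma active_mult:
  assumes k: "1 \<le> k" "k \<le> n" and j: "j \<le> n"
  shows "chain_min_cycle n k (active n k j) k = defect_mult n k j"
proof -
  consider "j = 0" | "j = k" | "k < j" | "0 < j" "j < k" by linarith
  then show ?thesis
  proof cases
    case 1
    then show ?thesis using minY_tent[of 1 k n n] k by (simp add: active_def defect_mult_def tent_def)
  next
    case 2
    then show ?thesis using k by (simp add: minY_def active_def defect_mult_def)
  next
    case 3
    then show ?thesis using minY_tent[of 1 k "j - 1" n] k j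
      by (simp add: active_def defect_mult_def tent_def of_nat_diff)
  next
    case 4
    then show ?thesis using minY_tent[of "j + 1" k n n] k j
      by (simp add: active_def defect_mult_def tent_def)
  qed
qed

lemma active_defect:
  assumes k: "1 \<le> k" "k \<le> n" and j: "j \<le> n" and F: "F \<in> {1..n}"
  shows "chain_e k F + cyc_dot chain_ip {1..n} (chain_min_cycle n k (active n k j)) F
     - (if F = j then 1 else 0) = - (if F = next_defect n k j then 1 else 0)"
proof -
  consider "j = 0" | "j = k" | "k < j" | "0 < j" "j < k" by linarith
  then show ?thesis
  proof cases
    case 1
    then show ?thesis using minY_tent[of 1 k n n] tent_defect[of 1 k n n F] k F
      by (simp add: active_def next_defect_def)
  next
    case 2
    then show ?thesis using k F by (simp add: minY_def active_def next_defect_def cyc_dot_def chain_e_def)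
  next
    case 3
    then show ?thesis using minY_tent[of 1 k "j - 1" n] tent_defect[of 1 k "j - 1" n F] k j F
      by (auto simp: active_def next_defect_def)
  next
    case 4
    then show ?thesis using minY_tent[of "j + 1" k n n] tent_defect[of "j + 1" k n n F] k j F
      by (auto simp: active_def next_defect_def)
  qed
qed

lemma ms_state_chain:
  assumes k: "1 \<le> k" "k \<le> n"
  shows "\<exists>Z. ms_state chain_ip (chain_e k) {1..n} k t =
      (active n k (defect_pos n k t), chain_min_cycle n k (active n k (defect_pos n k t)), int t + 1, Z)
    \<and> (\<forall>F\<in>{1..n}. (int t + 1) * chain_e k F + cyc_dot chain_ip {1..n} Z F
          = - (if F = defect_pos n k (Suc t) then 1 else 0))"
proof (induction t)
  case 0
  have "active n k 0 = {1..n}" by (simp add: active_def)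
  moreover have "chain_e k F + cyc_dot chain_ip {1..n} (chain_min_cycle n k {1..n}) F
      = - (if F = defect_pos n k 1 then 1 else 0)" if "F \<in> {1..n}" for F
    using active_defect[OF k, of 0 F] that by (simp add: active_def defect_pos_Suc)
  ultimately show ?case by simp
next
  case (Suc t)
  define j where "j = defect_pos n k (Suc t)"
  obtain Z where Z: "ms_state chain_ip (chain_e k) {1..n} k t =
      (active n k (defect_pos n k t), chain_min_cycle n k (active n k (defect_pos n k t)), int t + 1, Z)"
    and Z_dot: "\<forall>F\<in>{1..n}. (int t + 1) * chain_e k F + cyc_dot chain_ip {1..n} Z F = - (if F = j then 1 else 0)"
    using Suc.IH unfolding j_def by blast
  have zeros: "{F \<in> {1..n}. (int t + 1) * chain_e k F + cyc_dot chain_ip {1..n} Z F = 0} = {F \<in> {1..n}. F \<noteq> j}"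
    using Z_dot by auto
  define Y where "Y = chain_min_cycle n k (active n k j)"
  have j_le: "j \<le> n" using defect_pos_le k unfolding j_def by blast
  have "ms_state chain_ip (chain_e k) {1..n} k (Suc t) = (active n k j, Y, int t + 1 + 1, \<lambda>x. Z x + Y x)"
    using Z zeros active_component[OF k j_le] unfolding Y_def by (simp add: Let_def)
  moreover have "(int (Suc t) + 1) * chain_e k F + cyc_dot chain_ip {1..n} (\<lambda>x. Z x + Y x) F
      = - (if F = defect_pos n k (Suc (Suc t)) then 1 else 0)" if "F \<in> {1..n}" for F
  proof -
    have "(int t + 1) * chain_e k F + cyc_dot chain_ip {1..n} Z F = - (if F = j then 1 else 0)"
      using Z_dot that by blast
    moreover have "(int (Suc t) + 1) * chain_e k F = (int t + 1) * chain_e k F + chain_e k F"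
      by (simp add: algebra_simps)
    ultimately show ?thesis
      using active_defect[OF k j_le that] unfolding cyc_dot_add Y_def defect_pos_Suc[of n k "Suc t"] j_def
      by linarith
  qed
  ultimately show ?case unfolding Y_def j_def by (simp del: ms_state.simps)
qed

theorem chain_mult_seq_defect:
  assumes "1 \<le> k" "k \<le> n"
  shows "chain_mult_seq n k (Suc t) = defect_mult n k (defect_pos n k t)"
proof -
  obtain Z where "ms_state chain_ip (chain_e k) {1..n} k t =
      (active n k (defect_pos n k t), chain_min_cycle n k (active n k (defect_pos n k t)), int t + 1, Z)"
    using ms_state_chain[OF assms] by blast
  then show ?thesis
    using active_mult[OF assms defect_pos_le[OF assms(1)]]
    by (simp add: chain_mult_seq_def mult_seq_def)
qed

lemma defect_descend:
  assumes "1 \<le> k" "k \<le> j" and start: "defect_pos n k t = j + i * k" and "d \<le> i"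
  shows "defect_pos n k (t + d) = j + (i - d) * k"
  using assms(4)
proof (induction d)
  case 0 then show ?case using start by simp
next
  case (Suc d)
  have "1 \<le> i - d" using Suc.prems by arith
  then have "k \<le> (i - d) * k" using mult_le_mono1[of 1 "i - d" k] by simp
  then have above: "k < j + (i - d) * k" using assms(1,2) by linarith
  have "defect_pos n k (t + Suc d) = next_defect n k (j + (i - d) * k)"
    using Suc by (simp add: defect_pos_Suc)
  also have "\<dots> = j + ((i - d) * k - k)"
    using above assms(1,2) \<open>k \<le> (i - d) * k\<close> by (simp add: next_defect_def)
  also have "(i - d) * k - k = (i - Suc d) * k" by (simp add: diff_mult_distrib)
  finally show ?case .
qed

lemma defect_mult_far:
  assumes "1 \<le> k" "2 * k \<le> j" shows "defect_mult n k j = int k"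
  using assms by (simp add: defect_mult_def)

lemma defect_pos_k1:
  assumes "1 \<le> n"
  shows "defect_pos n 1 t = (if t mod (n + 1) = 0 then 0 else n + 1 - t mod (n + 1))"
proof (induction t)
  case 0 then show ?case by simp
next
  case (Suc t)
  define u where "u = t mod (n + 1)"
  have "u \<le> n" unfolding u_def by simp
  moreover have "Suc t mod (n + 1) = (if u = n then 0 else Suc u)"
    unfolding u_def by (simp add: mod_Suc)
  ultimately show ?case
    using Suc assms unfolding u_def[symmetric] by (auto simp: defect_pos_Suc next_defect_def)
qed

theorem chain_mult_seq_k1:
  assumes "1 \<le> n" "1 \<le> s"
  shows "chain_mult_seq n 1 s = (if s mod (n + 1) = 0 then 0 else 1)"
proof -
  obtain t where s: "s = Suc t" using assms(2) by (cases s) auto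
  define u where "u = t mod (n + 1)"
  have "u \<le> n" unfolding u_def by simp
  moreover have "s mod (n + 1) = (if u = n then 0 else Suc u)"
    unfolding u_def s by (simp add: mod_Suc)
  ultimately show ?thesis
    using chain_mult_seq_defect[of 1 n t] defect_pos_k1[OF assms(1), of t] assms(1) s
    unfolding u_def[symmetric] by (auto simp: defect_mult_def)
qed

context
  fixes n k l r :: nat
  assumes k2: "2 \<le> k" and l1: "1 \<le> l" and r_le: "r \<le> k - 1" and n_eq: "n = l * k + r + (k - 1)"
begin

lemma lk_split: "l * k = k + (l - 1) * k"
  using l1 by (cases l) auto

lemma k_le_n: "k \<le> n"
  using n_eq lk_split by linarith

lemma defect_first_descent:
  assumes "t < l" shows "defect_pos n k (Suc t) = k + r + (l - 1 - t) * k"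
proof -
  have "defect_pos n k 1 = k + r + (l - 1) * k"
    using k2 n_eq lk_split by (simp add: defect_pos_Suc next_defect_def)
  then show ?thesis
    using defect_descend[of k "k + r" n 1 "l - 1" t] k2 assms by simp
qed

lemma chain_first_plateau:
  assumes "1 \<le> s" "s \<le> l" shows "chain_mult_seq n k s = int k"
proof -
  obtain t where s: "s = Suc t" "t < l" using assms by (cases s) auto
  have "defect_mult n k (defect_pos n k t) = int k"
  proof (cases t)
    case 0
    then show ?thesis using k2 n_eq lk_split by (simp add: defect_mult_def)
  next
    case (Suc t')
    have "1 \<le> l - 1 - t'" using s Suc by simp
    then have "k \<le> (l - 1 - t') * k" using mult_le_mono1[of 1 "l - 1 - t'" k] by simp
    then have "2 * k \<le> k + r + (l - 1 - t') * k" by linarith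
    then show ?thesis
      using defect_first_descent[of t'] defect_mult_far[of k] s Suc k2 by simp
  qed
  then show ?thesis using chain_mult_seq_defect[OF _ k_le_n] k2 s by simp
qed

lemma defect_end_of_plateau: "defect_pos n k l = k + r"
  using defect_first_descent[of "l - 1"] l1 by simp

lemma chain_after_plateau: "chain_mult_seq n k (l + 1) = int r"
  using chain_mult_seq_defect[OF _ k_le_n, of l] defect_end_of_plateau k2 r_le
  by (simp add: defect_mult_def)

lemma chain_after_plateau_maximal:
  assumes "r = k - 1"
  shows "chain_mult_seq n k (l + 2) = 1" and "defect_pos n k (l + 2) = n"
proof -
  have pos: "defect_pos n k (l + 1) = k - 1"
    using defect_end_of_plateau assms k2 by (simp add: defect_pos_Suc next_defect_def)
  obtain k' where k': "k = Suc k'" "1 \<le> k'" using k2 by (cases k) auto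
  have "defect_mult n k (k - 1) = 1"
    using k' k_le_n by (simp add: defect_mult_def)
  then show "chain_mult_seq n k (l + 2) = 1"
    using chain_mult_seq_defect[OF _ k_le_n, of "l + 1"] pos k2 by simp
  have "defect_pos n k (l + 2) = next_defect n k (k - 1)"
    using defect_pos_Suc[of n k "l + 1"] pos by simp
  then show "defect_pos n k (l + 2) = n"
    using k' k_le_n by (simp add: next_defect_def)
qed

lemma defect_second_descent:
  assumes "k = 2" "r = 1" "d \<le> l" shows "defect_pos n k (l + 2 + d) = 2 + (l - d) * 2"
proof -
  have "defect_pos n k (l + 2) = 2 + l * 2"
    using chain_after_plateau_maximal(2) n_eq assms by simp
  then show ?thesis using defect_descend[of 2 2 n "l + 2" l d] assms by simp
qed

lemma chain_second_plateau:
  assumes "k = 2" "r = 1" "l + 3 \<le> s" "s \<le> 2 * l + 2" shows "chain_mult_seq n k s = 2"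
proof -
  define d where "d = s - (l + 3)"
  have s: "s = Suc (l + 2 + d)" "d < l" using assms(3,4) unfolding d_def by auto
  then show ?thesis
    using chain_mult_seq_defect[OF _ k_le_n, of "l + 2 + d"] defect_second_descent[OF assms(1,2), of d]
      defect_mult_far[of 2] assms(1) by simp
qed

(* ... followed by 0, since the component of k is then empty. *)
lemma chain_second_zero:
  assumes "k = 2" "r = 1" shows "chain_mult_seq n k (2 * l + 3) = 0"
  using chain_mult_seq_defect[OF _ k_le_n, of "l + 2 + l"] defect_second_descent[OF assms, of l] assms
  by (simp add: defect_mult_def numeral_eq_Suc)

lemma multiplicity_sequence_start:
  "(r < k - 1 \<longrightarrow> (\<forall>s. 1 \<le> s \<and> s \<le> l \<longrightarrow> chain_mult_seq n k s = int k)
                   \<and> chain_mult_seq n k (l + 1) = int r)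
   \<and> (r = k - 1 \<and> k \<ge> 3 \<longrightarrow> (\<forall>s. 1 \<le> s \<and> s \<le> l \<longrightarrow> chain_mult_seq n k s = int k)
                   \<and> chain_mult_seq n k (l + 1) = int k - 1
                   \<and> chain_mult_seq n k (l + 2) = 1)
   \<and> (k = 2 \<and> r = 1 \<longrightarrow> (\<forall>s. 1 \<le> s \<and> s \<le> l \<longrightarrow> chain_mult_seq n k s = 2)
                   \<and> chain_mult_seq n k (l + 1) = 1
                   \<and> chain_mult_seq n k (l + 2) = 1
                   \<and> (\<forall>s. l + 3 \<le> s \<and> s \<le> 2 * l + 2 \<longrightarrow> chain_mult_seq n k s = 2)
                   \<and> chain_mult_seq n k (2 * l + 3) = 0)"
  using chain_first_plateau chain_after_plateau chain_after_plateau_maximal(1)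
    chain_second_plateau chain_second_zero k2
  by (auto simp: of_nat_diff)

end

theorem proposition6:
  fixes n k :: nat
  assumes "k \<ge> 1" and "2 * k - 1 \<le> n"
  shows "(k = 1 \<longrightarrow> (\<forall>s\<ge>1. chain_mult_seq n k s = (if s mod (n + 1) = 0 then 0 else 1)))
     \<and> (\<forall>l r. k \<ge> 2 \<longrightarrow> l \<ge> 1 \<longrightarrow> r \<le> k - 1 \<longrightarrow> n = l * k + r + (k - 1) \<longrightarrow>
          ((r < k - 1 \<longrightarrow> (\<forall>s. 1 \<le> s \<and> s \<le> l \<longrightarrow> chain_mult_seq n k s = int k)
                         \<and> chain_mult_seq n k (l + 1) = int r)
         \<and> (r = k - 1 \<and> k \<ge> 3 \<longrightarrow> (\<forall>s. 1 \<le> s \<and> s \<le> l \<longrightarrow> chain_mult_seq n k s = int k)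
                         \<and> chain_mult_seq n k (l + 1) = int k - 1
                         \<and> chain_mult_seq n k (l + 2) = 1)
         \<and> (k = 2 \<and> r = 1 \<longrightarrow> (\<forall>s. 1 \<le> s \<and> s \<le> l \<longrightarrow> chain_mult_seq n k s = 2)
                         \<and> chain_mult_seq n k (l + 1) = 1
                         \<and> chain_mult_seq n k (l + 2) = 1
                         \<and> (\<forall>s. l + 3 \<le> s \<and> s \<le> 2 * l + 2 \<longrightarrow> chain_mult_seq n k s = 2)
                         \<and> chain_mult_seq n k (2 * l + 3) = 0)))"
proof -
  have "1 \<le> n" using assms by linarith
  then have part_i: "k = 1 \<longrightarrow> (\<forall>s\<ge>1. chain_mult_seq n k s = (if s mod (n + 1) = 0 then 0 else 1))"
    using chain_mult_seq_k1 by blast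
  show ?thesis
    using part_i multiplicity_sequence_start[of k _ _ n] by blast
qed

end
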